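(* Let $p$ be an odd prime with $p\equiv 5\pmod 8$. Then there exists a perfect $B[-1,3](p)$ set if and only if $6$ is a quartic residue modulo $p$, i.e. there is an integer $x$ with $x^4\equiv 6\pmod p$.
   Context: A set $B\subseteq\mathbb{Z}_p$ is a perfect $B[-1,3](p)$ set if every nonzero element of $\mathbb{Z}_p$ has a unique representation $ab \bmod p$ with $a\in\{-1,1,2,3\}$ and $b\in B$ (and $0$ has no such representation); equivalently $B\subseteq\mathbb{Z}_p^\ast$, $|B|=(p-1)/4$, and the sets $\{-b,b,2b,3b\}$, $b\in B$, partition $\mathbb{Z}_p^\ast=\mathbb{Z}_p\setminus\{0\}$. *)

theory Defs
  imports "HOL-Number_Theory.Number_Theory"
begin

text \<open>Elements of Z_p are represented by their canonical representatives in {0..<p}.\<close>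

definition perfect_B_m13 :: "int \<Rightarrow> int set \<Rightarrow> bool" where
  "perfect_B_m13 p B \<longleftrightarrow>
     B \<subseteq> {0..<p} \<and>
     (\<forall>y \<in> {1..<p}. \<exists>!(a, b). a \<in> {-1, 1, 2, 3} \<and> b \<in> B \<and> (a * b) mod p = y) \<and>
     (\<forall>a \<in> {-1, 1, 2, 3}. \<forall>b \<in> B. (a * b) mod p \<noteq> 0)"

end

theory Submission
  imports Defs
begin

text \<open>Fix a primitive root modulo \<open>p = 4m + 1\<close>, \<open>m\<close> odd, and write \<open>ind\<close> for the
  discrete logarithm, so that \<open>ind(-1) = 2m\<close> and \<open>ind 2\<close> is odd (2 is a non-residue).
  A perfect set \<open>B\<close> is closed under multiplication by \<open>-2/3\<close>, while \<open>b\<close> and \<open>-b\<close>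
  never both lie in \<open>B\<close>; hence \<open>-1\<close> is not a power of \<open>-2/3\<close>, which for odd \<open>m\<close> means
  \<open>ind(-2) \<equiv> ind 3 (mod 4)\<close>. Conversely, under this congruence \<open>ind(-1), ind 1, ind 2,
  ind 3\<close> are pairwise distinct modulo 4, and the nonzero fourth powers form a perfect set.
  Finally, \<open>6\<close> is a fourth power iff \<open>ind 2 + ind 3 \<equiv> 0 (mod 4)\<close>, which is the same
  condition since \<open>ind 2\<close> is odd.\<close>

section \<open>Perfect \<open>B[-1,3](p)\<close> sets\<close>

lemma mod_mem_nonzero_residues:
  fixes p y :: int
  assumes "p > 0" and "\<not> p dvd y"
  shows "y mod p \<in> {1..<p}"
proof -
  have "y mod p \<noteq> 0" using assms(2) by (simp add: dvd_eq_mod_eq_0)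
  with pos_mod_sign[OF assms(1), of y] pos_mod_bound[OF assms(1), of y] show ?thesis by auto
qed

lemma perfect_B_m13_not_dvd:
  assumes "perfect_B_m13 p B" and "a \<in> {-1, 1, 2, 3}" and "b \<in> B"
  shows "\<not> p dvd a * b"
proof -
  have "(a * b) mod p \<noteq> 0" using assms unfolding perfect_B_m13_def by (meson conjunct2)
  then show ?thesis by (simp add: dvd_eq_mod_eq_0)
qed

lemma perfect_B_m13_subset:
  assumes "perfect_B_m13 p B"
  shows "B \<subseteq> {0..<p}"
  using assms unfolding perfect_B_m13_def by (rule conjunct1)

lemma perfect_B_m13_ex1_rep:
  assumes "perfect_B_m13 p B" and "y \<in> {1..<p}"
  shows "\<exists>!(a, b). a \<in> {-1, 1, 2, 3} \<and> b \<in> B \<and> (a * b) mod p = y"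
proof -
  have "\<forall>y\<in>{1..<p}. \<exists>!(a, b). a \<in> {-1, 1, 2, 3} \<and> b \<in> B \<and> (a * b) mod p = y"
    using assms(1) unfolding perfect_B_m13_def by (rule conjunct1[OF conjunct2])
  then show ?thesis using assms(2) by (rule bspec)
qed

lemma perfect_B_m13_rep_exists:
  assumes "perfect_B_m13 p B" and "p > 0" and "\<not> p dvd y"
  obtains a b where "a \<in> {-1, 1, 2, 3}" and "b \<in> B" and "[a * b = y] (mod p)"
proof -
  obtain a b where "a \<in> {-1, 1, 2, 3}" "b \<in> B" "(a * b) mod p = y mod p"
    using ex1_implies_ex[OF perfect_B_m13_ex1_rep[OF assms(1) mod_mem_nonzero_residues[OF assms(2,3)]]]
    by auto
  then show thesis using that by (simp add: cong_def)
qed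

lemma perfect_B_m13_rep_unique:
  assumes "perfect_B_m13 p B"
    and "a \<in> {-1, 1, 2, 3}" and "b \<in> B" and "a' \<in> {-1, 1, 2, 3}" and "b' \<in> B"
    and "[a * b = a' * b'] (mod p)"
  shows "a = a' \<and> b = b'"
proof -
  define y where "y = (a * b) mod p"
  have "p > 0" using perfect_B_m13_subset[OF assms(1)] assms(3) by auto
  then have "y \<in> {1..<p}"
    unfolding y_def using perfect_B_m13_not_dvd[OF assms(1-3)] by (rule mod_mem_nonzero_residues)
  then have "\<exists>!(a, b). a \<in> {-1, 1, 2, 3} \<and> b \<in> B \<and> (a * b) mod p = y"
    by (rule perfect_B_m13_ex1_rep[OF assms(1)])
  then have "\<forall>z z'. (case z of (a, b) \<Rightarrow> a \<in> {-1, 1, 2, 3} \<and> b \<in> B \<and> (a * b) mod p = y)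
      \<and> (case z' of (a, b) \<Rightarrow> a \<in> {-1, 1, 2, 3} \<and> b \<in> B \<and> (a * b) mod p = y) \<longrightarrow> z = z'"
    by (elim alt_ex1E) assumption
  note unique = spec[OF spec[OF this, of "(a, b)"], of "(a', b')"]
  have "(a' * b') mod p = y" using assms(6) by (simp add: y_def cong_def)
  then have "(a, b) = (a', b')" using unique assms(2-5) by (simp add: y_def)
  then show ?thesis by simp
qed

lemma perfect_B_m13I:
  fixes p :: int and B :: "int set"
  assumes "B \<subseteq> {0..<p}"
    and "\<And>a b. a \<in> {-1, 1, 2, 3::int} \<Longrightarrow> b \<in> B \<Longrightarrow> \<not> p dvd a * b"
    and "\<And>y. \<not> p dvd y \<Longrightarrow> \<exists>a \<in> {-1, 1, 2, 3::int}. \<exists>b \<in> B. [a * b = y] (mod p)"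
    and "\<And>a b a' b'. a \<in> {-1, 1, 2, 3::int} \<Longrightarrow> b \<in> B \<Longrightarrow> a' \<in> {-1, 1, 2, 3::int} \<Longrightarrow> b' \<in> B \<Longrightarrow>
           [a * b = a' * b'] (mod p) \<Longrightarrow> a = a' \<and> b = b'"
  shows "perfect_B_m13 p B"
  unfolding perfect_B_m13_def
proof (intro conjI ballI)
  fix y assume y: "y \<in> {1..<p}"
  then have "\<not> p dvd y" using zdvd_imp_le[of p y] by auto
  then obtain c d where cd: "c \<in> {-1, 1, 2, 3}" "d \<in> B" "[c * d = y] (mod p)"
    using assms(3) by blast
  have "y mod p = y" using y by simp
  show "\<exists>!(a, b). a \<in> {-1, 1, 2, 3} \<and> b \<in> B \<and> (a * b) mod p = y"
  proof (rule ex1I[of _ "(c, d)"])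
    show "case (c, d) of (a, b) \<Rightarrow> a \<in> {-1, 1, 2, 3} \<and> b \<in> B \<and> (a * b) mod p = y"
      using cd \<open>y mod p = y\<close> by (simp add: cong_def)
  next
    fix z :: "int \<times> int"
    assume "case z of (a, b) \<Rightarrow> a \<in> {-1, 1, 2, 3} \<and> b \<in> B \<and> (a * b) mod p = y"
    then obtain a b where z: "z = (a, b)" and a: "a \<in> {-1, 1, 2, 3}" and b: "b \<in> B"
      and "(a * b) mod p = y"
      by (cases z) simp
    then have "[a * b = c * d] (mod p)" using cd(3) \<open>y mod p = y\<close> by (simp add: cong_def)
    then show "z = (c, d)" using assms(4)[OF a b cd(1,2)] z by simp
  qed
next
  show "B \<subseteq> {0..<p}" by (fact assms(1))
next
  fix a b :: int assume "a \<in> {-1, 1, 2, 3}" "b \<in> B"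
  then show "(a * b) mod p \<noteq> 0" using assms(2) by (simp add: dvd_eq_mod_eq_0)
qed

text \<open>Of the four candidate representations of \<open>-2b\<close>, the ones through \<open>2b\<close> and
  \<open>-2b\<close> collide with \<open>2 \<cdot> b\<close> and the one through \<open>-b\<close> collides with \<open>1 \<cdot> b\<close>;
  so \<open>B\<close> is closed under multiplication by \<open>-2/3\<close>.\<close>

lemma perfect_B_m13_closed:
  assumes "perfect_B_m13 p B" and "prime p" and "b \<in> B"
  shows "\<exists>x \<in> B. [3 * x = -2 * b] (mod p)"
proof -
  note unique = perfect_B_m13_rep_unique[OF assms(1) _ assms(3)]
  have "\<not> p dvd 2 * b" using perfect_B_m13_not_dvd[OF assms(1) _ assms(3)] by simp
  then have "\<not> p dvd -2 * b" by simp
  then obtain a x where a: "a \<in> {-1, 1, 2, 3}" and x: "x \<in> B" and ax: "[a * x = -2 * b] (mod p)"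
    by (rule perfect_B_m13_rep_exists[OF assms(1) prime_gt_0_int[OF assms(2)]])
  have "\<not> p dvd 2" using \<open>\<not> p dvd 2 * b\<close> dvd_mult2 by blast
  then have "coprime 2 p" using prime_imp_coprime[OF assms(2)] coprime_commute by blast
  consider "a = -1" | "a = 1" | "a = 2" | "a = 3" using a by auto
  then show ?thesis
  proof cases
    case 1
    then have "[2 * b = 1 * x] (mod p)" using ax by (simp add: cong_sym_eq cong_minus_minus_iff)
    then show ?thesis using unique[of 2 1 x] x by simp
  next
    case 2
    then have "[2 * b = -1 * x] (mod p)" using ax cong_minus_minus_iff by (fastforce simp: cong_sym_eq)
    then show ?thesis using unique[of 2 "-1" x] x by simp
  next
    case 3
    then have "[2 * x = 2 * (-b)] (mod p)" using ax by simp
    then have "[x = -b] (mod p)" using cong_mult_lcancel[OF \<open>coprime 2 p\<close>] by blast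
    then have "[-1 * b = 1 * x] (mod p)" by (simp add: cong_sym_eq)
    then show ?thesis using unique[of "-1" 1 x] x by simp
  next
    case 4
    then show ?thesis using ax x by blast
  qed
qed

lemma perfect_B_m13_closed_power:
  assumes "perfect_B_m13 p B" and "prime p" and "b \<in> B"
  shows "\<exists>x \<in> B. [3 ^ k * x = (-2) ^ k * b] (mod p)"
proof (induction k)
  case 0
  show ?case using assms(3) by (auto intro: cong_refl)
next
  case (Suc k)
  then obtain x where "x \<in> B" and x: "[3 ^ k * x = (-2) ^ k * b] (mod p)" by blast
  then obtain x' where "x' \<in> B" and x': "[3 * x' = -2 * x] (mod p)"
    using perfect_B_m13_closed[OF assms(1,2)] by blast
  have "3 ^ Suc k * x' = 3 ^ k * (3 * x')" by simp
  also have "[\<dots> = 3 ^ k * (-2 * x)] (mod p)" using x' by (rule cong_scalar_left)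
  also have "3 ^ k * (-2 * x) = -2 * (3 ^ k * x)" by simp
  also have "[\<dots> = -2 * ((-2) ^ k * b)] (mod p)" using x by (rule cong_scalar_left)
  finally show ?case using \<open>x' \<in> B\<close> by (auto simp: mult.assoc)
qed

lemma perfect_B_m13_no_power_cong_minus:
  assumes "perfect_B_m13 p B" and "prime p"
  shows "\<not> [(-2) ^ k = - (3 ^ k)] (mod p)"
proof
  assume k: "[(-2) ^ k = - (3 ^ k)] (mod p)"
  have "\<not> p dvd 1" using assms(2) not_prime_unit by blast
  then obtain a b where "a \<in> {-1, 1, 2, 3}" and b: "b \<in> B" and "[a * b = 1] (mod p)"
    by (rule perfect_B_m13_rep_exists[OF assms(1) prime_gt_0_int[OF assms(2)]])
  then obtain x where x: "x \<in> B" and "[3 ^ k * x = (-2) ^ k * b] (mod p)"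
    using perfect_B_m13_closed_power[OF assms] by blast
  note \<open>[3 ^ k * x = (-2) ^ k * b] (mod p)\<close>
  also have "[(-2) ^ k * b = 3 ^ k * (-b)] (mod p)"
    using cong_scalar_right[OF k, of b] by simp
  finally have cong: "[3 ^ k * x = 3 ^ k * (-b)] (mod p)" .
  have "\<not> p dvd 3 * b" using perfect_B_m13_not_dvd[OF assms(1) _ b, of 3] by simp
  then have "\<not> p dvd 3" using dvd_mult2 by blast
  then have "coprime 3 p" using prime_imp_coprime[OF assms(2)] coprime_commute by blast
  then have "[x = -b] (mod p)" using cong cong_mult_lcancel[of "3 ^ k" p x "-b"] by simp
  then have "[1 * x = -1 * b] (mod p)" by simp
  then show False using perfect_B_m13_rep_unique[OF assms(1) _ x _ b, of 1 "-1"] by simp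
qed

section \<open>Discrete logarithms modulo a prime\<close>

locale primitive_root_mod =
  fixes p g :: int and n :: nat
  assumes prime: "prime p"
    and order: "p = int n + 1"
    and pow_cong_iff: "[g ^ i = g ^ j] (mod p) \<longleftrightarrow> [i = j] (mod n)"
    and pow_surj: "\<not> p dvd x \<Longrightarrow> \<exists>i. [g ^ i = x] (mod p)"

lemma primitive_root_mod_exists:
  fixes p :: int
  assumes "prime p"
  obtains g where "primitive_root_mod p g (nat p - 1)"
proof -
  define q where "q = nat p"
  have p1: "p > 1" using assms prime_gt_1_int by blast
  have pq: "p = int q" using p1 q_def by simp
  have q: "prime q" using assms pq by simp
  obtain g0 where g0: "residue_primroot q g0"
    using prime_primitive_root_exists[OF _ q] q prime_gt_1_nat by blast
  have cop: "coprime q g0" and ordq: "ord q g0 = q - 1"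
    using g0 q by (auto simp: residue_primroot_def totient_prime)
  show ?thesis
  proof (rule that, unfold_locales)
    show "prime p" by fact
    show "p = int (nat p - 1) + 1" using p1 by simp
  next
    fix i j :: nat
    have "[int g0 ^ i = int g0 ^ j] (mod p) \<longleftrightarrow> [g0 ^ i = g0 ^ j] (mod q)"
      unfolding pq by (metis cong_int_iff of_nat_power)
    also have "\<dots> \<longleftrightarrow> [i = j] (mod ord q g0)" using order_divides_expdiff[OF cop] .
    finally show "[int g0 ^ i = int g0 ^ j] (mod p) \<longleftrightarrow> [i = j] (mod (nat p - 1))"
      using ordq q_def by simp
  next
    fix x :: int
    assume "\<not> p dvd x"
    define y where "y = nat (x mod p)"
    have yx: "int y = x mod p" using p1 y_def by simp
    have "y \<in> totatives q"
    proof -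
      have "x mod p \<in> {1..<p}" using mod_mem_nonzero_residues p1 \<open>\<not> p dvd x\<close> by simp
      then have "0 < y" and "y \<le> q" using yx pq by simp_all
      moreover have "coprime x p"
        using \<open>\<not> p dvd x\<close> assms by (simp add: prime_imp_coprime coprime_commute)
      then have "coprime (x mod p) p" using p1 by (simp add: coprime_mod_left_iff)
      then have "coprime y q" using yx pq by (metis coprime_int_iff)
      ultimately show ?thesis by (simp add: totatives_def)
    qed
    moreover have "(\<lambda>i. g0 ^ i mod q) ` {..<totient q} = totatives q"
      using residue_primroot_is_generator[of q g0] g0 q prime_gt_1_nat by (simp add: bij_betw_def)
    ultimately have "y \<in> (\<lambda>i. g0 ^ i mod q) ` {..<totient q}" by simp
    then obtain i where "g0 ^ i mod q = y" by blast
    then have "int g0 ^ i mod p = x mod p" using yx pq by (metis of_nat_mod of_nat_power)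
    then show "\<exists>i. [int g0 ^ i = x] (mod p)" by (auto simp: cong_def)
  qed
qed

text \<open>With \<open>d = a - b\<close>, the witness is \<open>k = 2m|d|\<close> for odd \<open>d\<close> and \<open>k = m|d|/2\<close>
  otherwise; in both cases \<open>dk\<close> is \<open>2m\<close> times an odd number.\<close>

lemma ex_mult_cong_plus_half_modulus:
  fixes a b m :: nat
  assumes "odd m" and "\<not> [a = b] (mod 4)"
  shows "\<exists>k. [a * k = 2 * m + b * k] (mod 4 * m)"
proof -
  define d where "d = int a - int b"
  have "\<not> 4 dvd d"
    using assms(2) cong_int_iff[of a b 4] by (simp add: d_def cong_iff_dvd_diff)
  have key: "4 * int m dvd 2 * int m * (c * \<bar>c\<bar>) - 2 * int m" if "odd c" for c
  proof -
    have "odd (c * \<bar>c\<bar>)" using that by simp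
    then obtain t where "c * \<bar>c\<bar> = 2 * t + 1" by (rule oddE)
    then have "2 * int m * (c * \<bar>c\<bar>) - 2 * int m = 4 * int m * t" by (simp add: algebra_simps)
    then show ?thesis by simp
  qed
  have "\<exists>k. 4 * int m dvd d * int k - 2 * int m"
  proof (cases "odd d")
    case True
    have "d * int (2 * m * nat \<bar>d\<bar>) = 2 * int m * (d * \<bar>d\<bar>)" by simp
    then show ?thesis using key[OF True] by metis
  next
    case False
    then obtain u where u: "d = 2 * u" by blast
    then have "odd u" using \<open>\<not> 4 dvd d\<close> by auto
    have "d * int (m * nat \<bar>u\<bar>) = 2 * int m * (u * \<bar>u\<bar>)" using u by simp
    then show ?thesis using key[OF \<open>odd u\<close>] by metis
  qed
  then obtain k where "4 * int m dvd d * int k - 2 * int m" by blast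
  then have "[int a * int k = 2 * int m + int b * int k] (mod 4 * int m)"
    by (simp add: cong_iff_dvd_diff d_def algebra_simps)
  then have "[int (a * k) = int (2 * m + b * k)] (mod int (4 * m))" by simp
  then have "[a * k = 2 * m + b * k] (mod 4 * m)" by (simp only: cong_int_iff)
  then show ?thesis by blast
qed

definition fourth_power_residues :: "int \<Rightarrow> int set" where
  "fourth_power_residues p = {x \<in> {1..<p}. \<exists>y. [y ^ 4 = x] (mod p)}"

context primitive_root_mod
begin

lemma order_pos: "n > 0"
  using prime_gt_1_int[OF prime] order by simp

lemma one_not_cong_minus_one:
  assumes "p \<noteq> 2"
  shows "\<not> [1 = -1] (mod p)"
proof
  assume "[1 = -1] (mod p)"
  then have "p dvd 2" by (simp add: cong_iff_dvd_diff)
  then have "p \<le> 2" using zdvd_imp_le by simp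
  then show False using prime_ge_2_int[OF prime] assms by simp
qed

lemma not_dvd_if_abs_less:
  assumes "x \<noteq> 0" and "\<bar>x\<bar> < p"
  shows "\<not> p dvd x"
  using dvd_imp_le_int[OF assms(1)] assms(2) prime_gt_1_int[OF prime] by fastforce

lemma not_dvd_pow: "\<not> p dvd g ^ i"
proof
  assume "p dvd g ^ i"
  then have "p dvd g" using prime_dvd_power[OF prime] by blast
  then have "p dvd g ^ n" using order_pos by (metis dvd_power dvd_trans)
  moreover have "[g ^ n = 1] (mod p)" using pow_cong_iff[of n 0] by (simp add: cong_def)
  ultimately have "p dvd 1" by (simp add: cong_dvd_iff)
  then show False using prime not_prime_unit by blast
qed

text \<open>For \<open>p dvd x\<close> the value \<open>dlog x\<close> is unspecified junk.\<close>

definition dlog :: "int \<Rightarrow> nat" where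
  "dlog x = (SOME i. [g ^ i = x] (mod p)) mod n"

lemma dlog_less: "dlog x < n"
  using order_pos by (simp add: dlog_def)

lemma pow_dlog:
  assumes "\<not> p dvd x"
  shows "[g ^ dlog x = x] (mod p)"
proof -
  have "[g ^ dlog x = g ^ (SOME i. [g ^ i = x] (mod p))] (mod p)"
    unfolding dlog_def pow_cong_iff by (simp add: cong_def)
  also have "[g ^ (SOME i. [g ^ i = x] (mod p)) = x] (mod p)"
    using pow_surj[OF assms] by (rule someI_ex)
  finally show ?thesis .
qed

lemma pow_cong_iff_dlog:
  assumes "\<not> p dvd x"
  shows "[g ^ i = x] (mod p) \<longleftrightarrow> [i = dlog x] (mod n)"
  using pow_dlog[OF assms] pow_cong_iff[of i "dlog x"] by (meson cong_sym cong_trans)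

lemma dlog_eqI:
  assumes "\<not> p dvd x" and "[g ^ i = x] (mod p)" and "i < n"
  shows "dlog x = i"
  using assms dlog_less pow_cong_iff_dlog cong_less_modulus_unique_nat by metis

lemma dlog_cong:
  assumes "[x = y] (mod p)"
  shows "dlog x = dlog y"
proof -
  have "(\<lambda>i. [g ^ i = x] (mod p)) = (\<lambda>i. [g ^ i = y] (mod p))"
    using assms by (intro ext) (meson cong_sym cong_trans)
  then show ?thesis by (simp add: dlog_def)
qed

lemma dlog_one: "dlog 1 = 0"
  using prime_gt_1_int[OF prime] order_pos by (intro dlog_eqI) auto

lemma dlog_minus_one:
  assumes "p \<noteq> 2"
  shows "2 * dlog (-1) = n"
proof -
  have "\<not> p dvd -1" using prime_gt_1_int[OF prime] by simp
  moreover have "g ^ (2 * dlog (-1)) = (g ^ dlog (-1)) ^ 2" by (metis mult.commute power_mult)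
  ultimately have "[g ^ (2 * dlog (-1)) = (-1) ^ 2] (mod p)"
    using cong_pow[OF pow_dlog, of "-1" 2] by simp
  then have "[2 * dlog (-1) = 0] (mod n)" using pow_cong_iff[of _ 0] by simp
  then obtain c where c: "2 * dlog (-1) = n * c" by (auto simp: cong_0_iff)
  have "dlog (-1) \<noteq> 0"
    using pow_dlog[OF \<open>\<not> p dvd -1\<close>] one_not_cong_minus_one[OF assms] by (metis power_0)
  then have "c \<noteq> 0" using c by (metis mult_0_right mult_eq_0_iff zero_neq_numeral)
  moreover have "n * c < n * 2" using c dlog_less[of "-1"] by linarith
  ultimately have "c = 1" by simp
  then show ?thesis using c by simp
qed

lemma dlog_mult:
  assumes "\<not> p dvd x" and "\<not> p dvd y"
  shows "[dlog (x * y) = dlog x + dlog y] (mod n)"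
proof -
  have "[g ^ (dlog x + dlog y) = x * y] (mod p)"
    unfolding power_add using cong_mult[OF pow_dlog[OF assms(1)] pow_dlog[OF assms(2)]] .
  moreover have "\<not> p dvd x * y" using assms prime by (simp add: prime_dvd_mult_iff)
  ultimately show ?thesis using pow_cong_iff_dlog cong_sym by blast
qed

lemma power_residue_iff_dvd_dlog:
  assumes "k dvd n" and "\<not> p dvd x"
  shows "(\<exists>y. [y ^ k = x] (mod p)) \<longleftrightarrow> k dvd dlog x"
proof
  assume "\<exists>y. [y ^ k = x] (mod p)"
  then obtain y where y: "[y ^ k = x] (mod p)" by blast
  have "k > 0" using assms(1) order_pos by (cases k) auto
  then have "\<not> p dvd y"
    using y assms(2) by (metis cong_dvd_iff dvd_power dvd_trans)
  have "g ^ (k * dlog y) = (g ^ dlog y) ^ k" by (metis mult.commute power_mult)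
  then have "[g ^ (k * dlog y) = x] (mod p)"
    using cong_trans[OF cong_pow[OF pow_dlog[OF \<open>\<not> p dvd y\<close>], of k] y] by simp
  then have "[k * dlog y = dlog x] (mod n)" using pow_cong_iff_dlog[OF assms(2)] by blast
  then have "[k * dlog y = dlog x] (mod k)" using assms(1) by (rule cong_dvd_modulus_nat)
  then show "k dvd dlog x" by (simp add: cong_def dvd_eq_mod_eq_0)
next
  assume "k dvd dlog x"
  then have "(g ^ (dlog x div k)) ^ k = g ^ dlog x" by (simp add: power_mult[symmetric])
  then show "\<exists>y. [y ^ k = x] (mod p)" using pow_dlog[OF assms(2)] by metis
qed

lemma gt_3_if_four_dvd_order:
  assumes "4 dvd n"
  shows "p > 3"
  using dvd_imp_le[OF assms order_pos] order by simp

lemma odd_dlog_if_pow_half_cong_minus_one: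
  assumes "p \<noteq> 2" and "\<not> p dvd x" and "[x ^ (n div 2) = -1] (mod p)"
  shows "odd (dlog x)"
proof
  assume "even (dlog x)"
  then obtain t where t: "dlog x = 2 * t" by blast
  obtain h where h: "n = 2 * h" using dlog_minus_one[OF assms(1)] by (metis sym)
  have "dlog x * (n div 2) = t * n" using t h by simp
  have "[x ^ (n div 2) = (g ^ dlog x) ^ (n div 2)] (mod p)"
    using cong_pow[OF cong_sym[OF pow_dlog[OF assms(2)]]] .
  also have "(g ^ dlog x) ^ (n div 2) = g ^ (t * n)"
    using \<open>dlog x * (n div 2) = t * n\<close> by (metis power_mult)
  also have "[g ^ (t * n) = 1] (mod p)" using pow_cong_iff[of "t * n" 0] by (simp add: cong_def)
  finally have "[1 = -1] (mod p)" using assms(3) by (meson cong_sym cong_trans)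
  then show False using one_not_cong_minus_one[OF assms(1)] by blast
qed

lemma ex_power_cong_minus_if_dlog_not_cong:
  assumes "n = 4 * m" and "odd m" and "\<not> p dvd x" and "\<not> p dvd y"
    and "\<not> [dlog x = dlog y] (mod 4)"
  shows "\<exists>k. [x ^ k = - (y ^ k)] (mod p)"
proof -
  obtain k where k: "[dlog x * k = 2 * m + dlog y * k] (mod n)"
    using ex_mult_cong_plus_half_modulus[OF assms(2,5)] assms(1) by blast
  have "p \<noteq> 2" using gt_3_if_four_dvd_order assms(1) by simp
  then have "dlog (-1) = 2 * m" using dlog_minus_one assms(1) by simp
  then have minus_one: "[g ^ (2 * m) = -1] (mod p)"
    using pow_dlog[of "-1"] prime_gt_1_int[OF prime] by simp
  have "[x ^ k = (g ^ dlog x) ^ k] (mod p)" using cong_pow[OF cong_sym[OF pow_dlog[OF assms(3)]]] .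
  also have "(g ^ dlog x) ^ k = g ^ (dlog x * k)" by (simp add: power_mult)
  also have "[\<dots> = g ^ (2 * m + dlog y * k)] (mod p)" using k pow_cong_iff by blast
  also have "g ^ (2 * m + dlog y * k) = g ^ (2 * m) * (g ^ dlog y) ^ k" by (simp add: power_add power_mult)
  also have "[\<dots> = -1 * y ^ k] (mod p)" using cong_mult[OF minus_one cong_pow[OF pow_dlog[OF assms(4)]]] .
  finally show ?thesis by auto
qed

lemma dlog_mod_four_of_fourth_power_factor:
  assumes "4 dvd n" and "\<not> p dvd a" and "b \<in> fourth_power_residues p" and "[a * b = y] (mod p)"
  shows "dlog y mod 4 = dlog a mod 4"
proof -
  have b: "\<not> p dvd b" "\<exists>c. [c ^ 4 = b] (mod p)"
    using assms(3) not_dvd_if_abs_less[of b] by (auto simp: fourth_power_residues_def)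
  have "dlog y = dlog (a * b)" using dlog_cong[OF assms(4)] by simp
  then have "[dlog y = dlog a + dlog b] (mod n)" using dlog_mult[OF assms(2) b(1)] by simp
  then have "[dlog y = dlog a + dlog b] (mod 4)" using assms(1) by (rule cong_dvd_modulus_nat)
  moreover have "4 dvd dlog b" using power_residue_iff_dvd_dlog[OF assms(1) b(1)] b(2) by blast
  ultimately show ?thesis unfolding cong_def by (auto elim!: dvdE)
qed

lemma dlog_mod_four_surj:
  assumes "inj_on (\<lambda>a. dlog a mod 4) {-1, 1, 2, 3}" and "r < 4"
  shows "\<exists>a \<in> {-1, 1, 2, 3}. dlog a mod 4 = r"
proof -
  let ?f = "\<lambda>a. dlog a mod 4"
  have "card (?f ` {-1, 1, 2, 3}) = card {..<4::nat}"
    using card_image[OF assms(1)] by simp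
  moreover have "?f ` {-1, 1, 2, 3} \<subseteq> {..<4}" by auto
  ultimately have "?f ` {-1, 1, 2, 3} = {..<4}" using card_subset_eq[of "{..<4}"] by blast
  then have "r \<in> ?f ` {-1, 1, 2, 3}" using assms(2) by simp
  then show ?thesis by (rule imageE) blast
qed

lemma fourth_power_residues_rep_exists:
  assumes "4 dvd n" and "inj_on (\<lambda>a. dlog a mod 4) {-1, 1, 2, 3}" and "\<not> p dvd y"
  shows "\<exists>a \<in> {-1, 1, 2, 3}. \<exists>b \<in> fourth_power_residues p. [a * b = y] (mod p)"
proof -
  obtain a where a: "a \<in> {-1, 1, 2, 3}" and a_mod: "dlog a mod 4 = dlog y mod 4"
    using dlog_mod_four_surj[OF assms(2), of "dlog y mod 4"] by auto
  define i where "i = (dlog y + n - dlog a) div 4"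
  have "(dlog y + n) mod 4 = dlog a mod 4" using a_mod assms(1) by (auto elim!: dvdE)
  then have "4 dvd dlog y + n - dlog a" using dlog_less[of a] by (simp add: mod_eq_dvd_iff_nat)
  then have i: "dlog a + 4 * i = dlog y + n" using dlog_less[of a] unfolding i_def by simp
  define b where "b = (g ^ i) ^ 4 mod p"
  have "(g ^ i) ^ 4 = g ^ (4 * i)" by (simp add: power_mult[symmetric] mult.commute)
  then have "\<not> p dvd (g ^ i) ^ 4" using not_dvd_pow by simp
  then have "b \<in> fourth_power_residues p"
    using mod_mem_nonzero_residues prime_gt_0_int[OF prime]
    by (auto simp: b_def fourth_power_residues_def cong_def)
  have "\<not> p dvd a" using a gt_3_if_four_dvd_order[OF assms(1)] not_dvd_if_abs_less by auto
  have "[a * b = g ^ dlog a * g ^ (4 * i)] (mod p)"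
    using cong_mult[OF cong_sym[OF pow_dlog[OF \<open>\<not> p dvd a\<close>]], of b "g ^ (4 * i)"]
      \<open>(g ^ i) ^ 4 = g ^ (4 * i)\<close>
    by (simp add: b_def cong_def)
  also have "g ^ dlog a * g ^ (4 * i) = g ^ (dlog y + n)" by (simp add: power_add[symmetric] i)
  also have "[g ^ (dlog y + n) = y] (mod p)"
    using pow_cong_iff_dlog[OF assms(3)] by (simp add: cong_def)
  finally show ?thesis using a \<open>b \<in> fourth_power_residues p\<close> by blast
qed

lemma perfect_B_m13_fourth_power_residues:
  assumes "4 dvd n" and inj: "inj_on (\<lambda>a. dlog a mod 4) {-1, 1, 2, 3}"
  shows "perfect_B_m13 p (fourth_power_residues p)"
proof (rule perfect_B_m13I)
  have A: "\<not> p dvd a" if "a \<in> {-1, 1, 2, 3}" for a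
    using that gt_3_if_four_dvd_order[OF assms(1)] not_dvd_if_abs_less by auto
  have Q: "\<not> p dvd b" if "b \<in> fourth_power_residues p" for b
    using that not_dvd_if_abs_less[of b] by (auto simp: fourth_power_residues_def)
  show "fourth_power_residues p \<subseteq> {0..<p}" by (auto simp: fourth_power_residues_def)
  show "\<not> p dvd a * b" if "a \<in> {-1, 1, 2, 3}" and "b \<in> fourth_power_residues p" for a b
    using A[OF that(1)] Q[OF that(2)] prime by (simp add: prime_dvd_mult_iff)
  show "\<exists>a \<in> {-1, 1, 2, 3}. \<exists>b \<in> fourth_power_residues p. [a * b = y] (mod p)"
    if "\<not> p dvd y" for y
    using fourth_power_residues_rep_exists[OF assms that] .
  fix a b a' b'
  assume a: "a \<in> {-1, 1, 2, 3}" and b: "b \<in> fourth_power_residues p"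
    and a': "a' \<in> {-1, 1, 2, 3}" and b': "b' \<in> fourth_power_residues p"
    and ab: "[a * b = a' * b'] (mod p)"
  have "dlog a mod 4 = dlog a' mod 4"
    using dlog_mod_four_of_fourth_power_factor[OF assms(1) A[OF a] b ab]
      dlog_mod_four_of_fourth_power_factor[OF assms(1) A[OF a'] b' cong_refl] by simp
  then have "a = a'" by (rule inj_onD[OF inj _ a a'])
  moreover have "coprime a p" using A[OF a] prime prime_imp_coprime coprime_commute by blast
  ultimately have "[b = b'] (mod p)" using ab cong_mult_lcancel by blast
  then have "b = b'" using b b' by (intro cong_less_imp_eq_int) (auto simp: fourth_power_residues_def)
  then show "a = a' \<and> b = b'" using \<open>a = a'\<close> by simp
qed

end

section \<open>Primes \<open>p \<equiv> 5 (mod 8)\<close>\<close>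

text \<open>Gauss's lemma: for \<open>p = 8k + 5\<close> exactly the \<open>2k + 1\<close> doubles \<open>2x\<close> with
  \<open>2k + 2 \<le> x \<le> 4k + 2\<close> exceed \<open>(p - 1)/2\<close>.\<close>

lemma two_pow_half_cong_minus_one:
  fixes p :: int
  assumes "prime p" and "[p = 5] (mod 8)"
  shows "[2 ^ ((nat p - 1) div 2) = -1] (mod p)"
proof -
  define k where "k = p div 8"
  have p: "p = 8 * k + 5" using assms(2) unfolding k_def cong_def by presburger
  have k0: "k \<ge> 0" using prime_gt_1_int[OF assms(1)] p by linarith
  interpret G: GAUSS "nat p" 2
    using assms(1) p k0 by unfold_locales (auto simp: cong_def)
  have pp: "int (nat p) = p" using k0 p by simp
  have half: "(int (nat p) - 1) div 2 = 4 * k + 2" using pp p by simp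
  have "G.C = (\<lambda>x. x * 2) ` {1..4 * k + 2}"
  proof -
    have "G.A = {1..4 * k + 2}" unfolding G.A_def half by auto
    moreover have "(x * 2) mod p = x * 2" if "x \<in> {1..4 * k + 2}" for x using that p by auto
    ultimately show ?thesis unfolding G.C_def G.B_def pp by (auto simp: image_image intro!: image_cong)
  qed
  then have "G.E = (\<lambda>x. x * 2) ` {2 * k + 2..4 * k + 2}" unfolding G.E_def half by force
  then have "card G.E = card {2 * k + 2..4 * k + 2}" by (simp add: card_image inj_on_def)
  also have "\<dots> = 2 * nat k + 1" using k0 by simp
  finally have "(-1 :: int) ^ card G.E = -1" by simp
  moreover have "nat ((int (nat p) - 1) div 2) = (nat p - 1) div 2" using pp p k0 by simp
  ultimately show ?thesis using G.pre_gauss_lemma pp by metis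
qed

context primitive_root_mod
begin

lemma dlog_minus_two_cong:
  assumes "n = 4 * m" and "odd m"
  shows "[dlog (-2) = dlog 2 + 2] (mod 4)"
proof -
  have "p > 3" using gt_3_if_four_dvd_order assms(1) by simp
  then have "\<not> p dvd -1" and "\<not> p dvd 2" using not_dvd_if_abs_less by simp_all
  have "dlog (-1) = 2 * m" using dlog_minus_one \<open>p > 3\<close> assms(1) by simp
  have "dlog (-2) = dlog (-1 * 2)" by simp
  then have "[dlog (-2) = dlog (-1) + dlog 2] (mod n)"
    using dlog_mult[OF \<open>\<not> p dvd -1\<close> \<open>\<not> p dvd 2\<close>] by simp
  then have "[dlog (-2) = 2 * m + dlog 2] (mod 4)"
    using cong_dvd_modulus_nat[of _ _ n 4] assms(1) \<open>dlog (-1) = 2 * m\<close> by simp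
  then show ?thesis using assms(2) unfolding cong_def by presburger
qed

lemma exists_perfect_B_m13_iff:
  assumes "n = 4 * m" and "odd m" and "odd (dlog 2)"
  shows "(\<exists>B. perfect_B_m13 p B) \<longleftrightarrow> [dlog 3 = dlog 2 + 2] (mod 4)"
proof
  assume "\<exists>B. perfect_B_m13 p B"
  then obtain B where B: "perfect_B_m13 p B" ..
  have "p > 3" using gt_3_if_four_dvd_order assms(1) by simp
  then have "\<not> p dvd -2" and "\<not> p dvd 3" using not_dvd_if_abs_less by simp_all
  moreover have "\<not> [(-2) ^ k = - (3 ^ k)] (mod p)" for k
    using perfect_B_m13_no_power_cong_minus[OF B prime] .
  ultimately have "[dlog (-2) = dlog 3] (mod 4)"
    using ex_power_cong_minus_if_dlog_not_cong[OF assms(1,2) \<open>\<not> p dvd -2\<close> \<open>\<not> p dvd 3\<close>] by blast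
  then show "[dlog 3 = dlog 2 + 2] (mod 4)"
    using dlog_minus_two_cong[OF assms(1,2)] by (meson cong_sym cong_trans)
next
  assume "[dlog 3 = dlog 2 + 2] (mod 4)"
  then have "dlog 3 mod 4 = (dlog 2 + 2) mod 4" by (simp add: cong_def)
  then have "dlog 2 mod 4 = 1 \<and> dlog 3 mod 4 = 3 \<or> dlog 2 mod 4 = 3 \<and> dlog 3 mod 4 = 1"
    using assms(3) by presburger
  moreover have "dlog (-1) = 2 * m" using dlog_minus_one gt_3_if_four_dvd_order assms(1) by simp
  then have "dlog (-1) mod 4 = 2" using assms(2) by presburger
  ultimately have "inj_on (\<lambda>a. dlog a mod 4) {-1, 1, 2, 3}"
    unfolding inj_on_def using dlog_one by auto
  moreover have "4 dvd n" using assms(1) by simp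
  ultimately show "\<exists>B. perfect_B_m13 p B" using perfect_B_m13_fourth_power_residues by blast
qed

lemma fourth_root_six_iff:
  assumes "n = 4 * m" and "odd m" and "odd (dlog 2)"
  shows "(\<exists>x. [x ^ 4 = 6] (mod p)) \<longleftrightarrow> [dlog 3 = dlog 2 + 2] (mod 4)"
proof -
  have "p > 3" using gt_3_if_four_dvd_order assms(1) by simp
  then have "\<not> p dvd 2" and "\<not> p dvd 3" using not_dvd_if_abs_less by simp_all
  then have "\<not> p dvd 6" using prime prime_dvd_mult_iff[of p 2 3] by simp
  have "(\<exists>x. [x ^ 4 = 6] (mod p)) \<longleftrightarrow> 4 dvd dlog 6"
    using power_residue_iff_dvd_dlog[OF _ \<open>\<not> p dvd 6\<close>] assms(1) by simp
  moreover have "[dlog 6 = dlog 2 + dlog 3] (mod 4)"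
    using dlog_mult[OF \<open>\<not> p dvd 2\<close> \<open>\<not> p dvd 3\<close>] cong_dvd_modulus_nat[of _ _ n 4] assms(1) by simp
  moreover have "4 dvd dlog 2 + dlog 3 \<longleftrightarrow> [dlog 3 = dlog 2 + 2] (mod 4)"
    using assms(3) unfolding cong_def by presburger
  ultimately show ?thesis by (simp add: cong_def dvd_eq_mod_eq_0)
qed

end

theorem theorem4p6:
  fixes p :: int
  assumes "prime p" and "odd p" and "[p = 5] (mod 8)"
  shows "(\<exists>B. perfect_B_m13 p B) \<longleftrightarrow> (\<exists>x::int. [x ^ 4 = 6] (mod p))"
proof -
  obtain g where "primitive_root_mod p g (nat p - 1)"
    using primitive_root_mod_exists[OF assms(1)] .
  then interpret primitive_root_mod p g "nat p - 1" .
  define m where "m = nat (p div 4)"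
  have "p = 4 * (p div 4) + 1" and "odd (p div 4)" using assms(3) unfolding cong_def by presburger+
  then have n: "nat p - 1 = 4 * m" and "odd m" using prime_gt_1_int[OF assms(1)] unfolding m_def
    by (simp_all add: even_nat_iff)
  have "p > 3" using gt_3_if_four_dvd_order n by simp
  then have "odd (dlog 2)"
    using odd_dlog_if_pow_half_cong_minus_one two_pow_half_cong_minus_one[OF assms(1,3)]
      not_dvd_if_abs_less[of 2] by simp
  then show ?thesis
    using exists_perfect_B_m13_iff[OF n \<open>odd m\<close>] fourth_root_six_iff[OF n \<open>odd m\<close>] by simp
qed

end
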